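(* Let $K=3$ and $r^\star(a)=\mathbb{1}(a=1)$. For every integer $n>500$ there exists a distribution $\mu$ on ordered pairs of distinct arms such that, with probability at least $0.09$ over a dataset $\mathcal{D}$ of $n$ i.i.d. samples generated as in the context, for every sequence $(r^{(m)})_{m\ge1}\subset\{r\in\mathbb{R}^3:r(3)=0\}$ with $\hat{\mathcal{L}}_{\mathsf{CE}}(\mathcal{D},r^{(m)})\to\inf_{r(3)=0}\hat{\mathcal{L}}_{\mathsf{CE}}(\mathcal{D},r)$, there is $m_0$ such that for all $m\ge m_0$, arm $1$ is not a maximizer of $r^{(m)}$; consequently every policy $\hat\pi_\infty$ supported on $\arg\max_a r^{(m)}(a)$ satisfies $$\mathsf{SubOpt}(\hat\pi_\infty)\ge 1.$$
   Context: $K$-armed bandit preference model. Arms are $[K]$ with deterministic ground-truth rewards $r^\star(a)$. Let $\sigma(x)=e^x/(1+e^x)$. A sample $(a,a',y)$ is generated by drawing $(a,a')\sim\mu$ (a distribution on ordered pairs of distinct arms) and $y\sim\mathrm{Bernoulli}(\sigma(r^\star(a)-r^\star(a')))$, $y=1$ meaning $a$ is preferred; $\mathcal{D}=\{(a_i,a_i',y_i)\}_{i=1}^n$ consists of $n$ i.i.d. samples. Empirical cross-entropy loss: $$\hat{\mathcal{L}}_{\mathsf{CE}}(\mathcal{D},r)=-\frac1n\sum_{i=1}^n\Big[y_i\log\sigma(r(a_i)-r(a_i'))+(1-y_i)\log\sigma(r(a_i')-r(a_i))\Big].$$ The policy $\hat\pi_\infty$ is the greedy policy on the estimated reward, $\hat\pi_\infty(a)=\mathbb{1}(a=\arg\max_{a'}\hat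 r(a'))$ (the $\lambda\to\infty$ limit of the KL-regularized optimum $\pi_\lambda(a)\propto\pi_0(a)e^{\lambda\hat r(a)}$). For a policy $\pi\in\Delta([K])$, $\mathsf{SubOpt}(\pi)=\max_a r^\star(a)-\mathbb{E}_{a\sim\pi}[r^\star(a)]$. *)

theory Defs
  imports "HOL-Probability.Probability"
begin

definition arms3 :: "nat set" where "arms3 = {1, 2, 3}"

definition sigm :: "real \<Rightarrow> real" where "sigm x = exp x / (1 + exp x)"

definition rstar :: "nat \<Rightarrow> real" where "rstar a = (if a = 1 then 1 else 0)"

definition pair_dist :: "(nat \<times> nat) pmf \<Rightarrow> bool" where
  "pair_dist \<mu> \<longleftrightarrow> set_pmf \<mu> \<subseteq> {(a, a'). a \<in> arms3 \<and> a' \<in> arms3 \<and> a \<noteq> a'}"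

text \<open>One sample (a, a', y): (a,a') ~ mu, y ~ Bernoulli(sigma(r a - r a')), y = True means a preferred.\<close>
definition sample_pmf :: "(nat \<Rightarrow> real) \<Rightarrow> (nat \<times> nat) pmf \<Rightarrow> (nat \<times> nat \<times> bool) pmf" where
  "sample_pmf r \<mu> = bind_pmf \<mu> (\<lambda>(a, a'). map_pmf (\<lambda>y. (a, a', y)) (bernoulli_pmf (sigm (r a - r a'))))"

primrec iid_pmf :: "nat \<Rightarrow> 'a pmf \<Rightarrow> 'a list pmf" where
  "iid_pmf 0 p = return_pmf []"
| "iid_pmf (Suc n) p = bind_pmf p (\<lambda>x. map_pmf (\<lambda>xs. x # xs) (iid_pmf n p))"

definition CE_loss :: "(nat \<times> nat \<times> bool) list \<Rightarrow> (nat \<Rightarrow> real) \<Rightarrow> real" where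
  "CE_loss D r = - (1 / real (length D)) *
     (\<Sum>i<length D. (case D ! i of (a, a', y) \<Rightarrow>
        of_bool y * ln (sigm (r a - r a')) + (1 - of_bool y) * ln (sigm (r a' - r a))))"

definition argmax_arms :: "(nat \<Rightarrow> real) \<Rightarrow> nat set" where
  "argmax_arms r = {a \<in> arms3. \<forall>b \<in> arms3. r b \<le> r a}"

definition SubOpt :: "nat pmf \<Rightarrow> real" where
  "SubOpt \<pi> = Max (rstar ` arms3) - measure_pmf.expectation \<pi> rstar"

end

theory Submission imports Defs begin

text \<open>Let \<mu> put mass 1/n on the pair (1,2) and the rest on (2,3). With probability
  (1 - \<sigma>(1)/n)^n - (1 - 1/n)^n \<ge> (1 - \<sigma>(1))/e > 0.09 the data contain only comparisons
  of arms 2 and 3 and comparisons of arms 1 and 2 won by arm 2, at least one of them. On such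
  data, whenever r(1) \<ge> r(2), moving r(1) down to r(2) - 1 decreases the loss by at least
  (ln \<sigma>(1) - ln \<sigma>(0))/n. Hence every minimizing sequence eventually ranks arm 1 strictly
  below arm 2, and the greedy policy never plays the optimal arm.\<close>

lemma sigm_pos: "0 < sigm x"
  by (simp add: sigm_def add_pos_pos)

lemma sigm_less_one: "sigm x < 1"
  by (simp add: sigm_def add_pos_pos)

lemma one_minus_sigm: "1 - sigm x = 1 / (1 + exp x)"
proof -
  have "1 + exp x > 0" by (simp add: add_pos_pos)
  then show ?thesis by (simp add: sigm_def field_simps)
qed

lemma sigm_strict_mono:
  assumes "x < y"
  shows "sigm x < sigm y"
proof -
  have "1 / (1 + exp y) < 1 / (1 + exp x)"
    using assms by (intro divide_strict_left_mono) (auto simp: add_pos_pos)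
  then show ?thesis using one_minus_sigm[of x] one_minus_sigm[of y] by simp
qed

lemma sigm_mono: "x \<le> y \<Longrightarrow> sigm x \<le> sigm y"
  using sigm_strict_mono[of x y] by (cases "x = y") auto

definition pref_loglik :: "(nat \<Rightarrow> real) \<Rightarrow> nat \<times> nat \<times> bool \<Rightarrow> real" where
  "pref_loglik r x = (case x of (a, a', y) \<Rightarrow>
     of_bool y * ln (sigm (r a - r a')) + (1 - of_bool y) * ln (sigm (r a' - r a)))"

lemma pref_loglik_nonpos: "pref_loglik r x \<le> 0"
proof -
  have "ln (sigm z) \<le> 0" for z using sigm_pos[of z] sigm_less_one[of z] by simp
  then show ?thesis unfolding pref_loglik_def by (cases x) auto
qed

lemma CE_loss_eq_sum: "CE_loss D r = - (\<Sum>i<length D. pref_loglik r (D ! i)) / length D"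
  unfolding CE_loss_def pref_loglik_def by simp

lemma CE_loss_nonneg: "0 \<le> CE_loss D r"
  unfolding CE_loss_eq_sum using pref_loglik_nonpos by (simp add: sum_nonpos divide_nonpos_nonneg)

lemma minimizing_seq_eventually_avoids:
  fixes f :: "'a \<Rightarrow> real"
  assumes bdd: "bdd_below (f ` S)" and "c > 0"
    and improve: "\<And>x. x \<in> S \<Longrightarrow> P x \<Longrightarrow> g x \<in> S \<and> f (g x) + c \<le> f x"
    and xs: "\<And>m. xs m \<in> S" and lim: "(\<lambda>m. f (xs m)) \<longlonglongrightarrow> (INF x \<in> S. f x)"
  shows "\<forall>\<^sub>F m in sequentially. \<not> P (xs m)"
proof -
  have "\<forall>\<^sub>F m in sequentially. f (xs m) < (INF x \<in> S. f x) + c"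
    using order_tendstoD(2)[OF lim] \<open>c > 0\<close> by simp
  then show ?thesis
  proof (rule eventually_mono)
    fix m assume close: "f (xs m) < (INF x \<in> S. f x) + c"
    show "\<not> P (xs m)"
    proof
      assume "P (xs m)"
      with improve xs have "g (xs m) \<in> S" "f (g (xs m)) + c \<le> f (xs m)" by blast+
      with cINF_lower[OF bdd] close show False by fastforce
    qed
  qed
qed

definition misleading_data :: "(nat \<times> nat \<times> bool) list \<Rightarrow> bool" where
  "misleading_data D \<longleftrightarrow>
     set D \<subseteq> {(1, 2, False), (2, 3, True), (2, 3, False)} \<and> (1, 2, False) \<in> set D"

lemma CE_loss_demote_arm1:
  assumes D: "misleading_data D" and le: "r 2 \<le> r 1"
  shows "CE_loss D (r(1 := r 2 - 1)) + (ln (sigm 1) - ln (sigm 0)) / length D \<le> CE_loss D r"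
proof -
  define r' where "r' = r(1 := r 2 - 1)"
  define gain where "gain i = pref_loglik r' (D ! i) - pref_loglik r (D ! i)" for i
  from D obtain j where j: "j < length D" "D ! j = (1, 2, False)"
    unfolding misleading_data_def by (metis in_set_conv_nth)
  have lost: "ln (sigm (r 2 - r 1)) \<le> ln (sigm 1)" "ln (sigm (r 2 - r 1)) \<le> ln (sigm 0)"
    using le sigm_mono[of "r 2 - r 1" 1] sigm_mono[of "r 2 - r 1" 0] sigm_pos by auto
  have gain_nonneg: "0 \<le> gain i" if "i < length D" for i
  proof -
    have "D ! i \<in> {(1, 2, False), (2, 3, True), (2, 3, False)}"
      using D that nth_mem unfolding misleading_data_def by blast
    then show ?thesis using lost unfolding gain_def pref_loglik_def r'_def by auto
  qed
  have gain_j: "ln (sigm 1) - ln (sigm 0) \<le> gain j"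
    using lost j unfolding gain_def pref_loglik_def r'_def by auto
  have "ln (sigm 1) - ln (sigm 0) \<le> (\<Sum>i<length D. gain i)"
    using member_le_sum[of j "{..<length D}" gain] gain_nonneg gain_j j by auto
  then have "(ln (sigm 1) - ln (sigm 0)) / length D \<le> (\<Sum>i<length D. gain i) / length D"
    by (simp add: divide_right_mono)
  then show ?thesis
    unfolding CE_loss_eq_sum r'_def[symmetric] gain_def sum_subtractf
    by (simp add: diff_divide_distrib)
qed

lemma misleading_data_minimizers_demote_arm1:
  assumes D: "misleading_data D" and rs: "\<And>m. rs m 3 = 0"
    and lim: "(\<lambda>m. CE_loss D (rs m)) \<longlonglongrightarrow> (INF r \<in> {r. r 3 = 0}. CE_loss D r)"
  shows "\<forall>\<^sub>F m in sequentially. rs m 1 < rs m 2"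
proof -
  have "0 < ln (sigm 1) - ln (sigm 0)"
    using sigm_strict_mono[of 0 1] sigm_pos[of 0] by simp
  moreover have "0 < length D"
    using D unfolding misleading_data_def by auto
  ultimately have "\<forall>\<^sub>F m in sequentially. \<not> rs m 2 \<le> rs m 1"
    using CE_loss_nonneg CE_loss_demote_arm1[OF D] rs lim
    by (intro minimizing_seq_eventually_avoids[where g = "\<lambda>r. r(1 := r 2 - 1)"])
       (auto intro: bdd_belowI2[of _ 0])
  then show ?thesis by (simp add: not_le)
qed

lemma not_argmax_arm1: "r 1 < r 2 \<Longrightarrow> 1 \<notin> argmax_arms r"
  unfolding argmax_arms_def arms3_def by auto

lemma SubOpt_avoiding_arm1:
  assumes "1 \<notin> set_pmf \<pi>"
  shows "SubOpt \<pi> = 1"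
proof -
  have "measure_pmf.expectation \<pi> rstar = measure_pmf.expectation \<pi> (\<lambda>_. 0)"
    using assms by (intro integral_cong_AE) (auto simp: AE_measure_pmf_iff rstar_def)
  moreover have "Max (rstar ` arms3) = 1" by (simp add: arms3_def rstar_def)
  ultimately show ?thesis unfolding SubOpt_def by simp
qed

lemma misleading_data_greedy_suboptimal:
  assumes D: "misleading_data D" and rs: "\<forall>m. rs m 3 = 0"
    and lim: "(\<lambda>m. CE_loss D (rs m)) \<longlonglongrightarrow> (INF r \<in> {r. r 3 = 0}. CE_loss D r)"
  shows "\<exists>m0. \<forall>m \<ge> m0. 1 \<notin> argmax_arms (rs m) \<and>
           (\<forall>\<pi>. set_pmf \<pi> \<subseteq> argmax_arms (rs m) \<longrightarrow> SubOpt \<pi> \<ge> 1)"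
proof -
  from misleading_data_minimizers_demote_arm1[OF D _ lim] rs
  obtain m0 where "\<forall>m \<ge> m0. rs m 1 < rs m 2"
    unfolding eventually_sequentially by blast
  then show ?thesis
    using not_argmax_arm1 SubOpt_avoiding_arm1 by (metis order.refl subsetD)
qed

lemma emeasure_iid_all_in:
  "emeasure (measure_pmf (iid_pmf n p)) {xs. set xs \<subseteq> S} = emeasure (measure_pmf p) S ^ n"
proof (induction n)
  case 0
  then show ?case by simp
next
  case (Suc n)
  have "(Cons x) -` {xs. set xs \<subseteq> S} = (if x \<in> S then {xs. set xs \<subseteq> S} else {})" for x
    by auto
  then have "emeasure (measure_pmf (iid_pmf (Suc n) p)) {xs. set xs \<subseteq> S}
      = (\<integral>\<^sup>+x. indicator S x * emeasure (measure_pmf p) S ^ n \<partial>p)"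
    by (auto simp: Suc intro!: nn_integral_cong split: split_indicator)
  also have "\<dots> = emeasure (measure_pmf p) S * emeasure (measure_pmf p) S ^ n"
    by (simp add: nn_integral_multc)
  finally show ?case by simp
qed

lemma prob_iid_all_in:
  "measure_pmf.prob (iid_pmf n p) {xs. set xs \<subseteq> S} = measure_pmf.prob p S ^ n"
  using emeasure_iid_all_in[of n p S]
  by (simp add: measure_pmf.emeasure_eq_measure ennreal_power)

definition rare_pair_pmf :: "real \<Rightarrow> (nat \<times> nat) pmf" where
  "rare_pair_pmf p = map_pmf (\<lambda>b. if b then (1, 2) else (2, 3)) (bernoulli_pmf p)"

lemma pair_dist_rare_pair_pmf: "pair_dist (rare_pair_pmf p)"
  unfolding pair_dist_def rare_pair_pmf_def arms3_def by auto

lemma prob_sample_misleading: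
  assumes "0 < p" "p < 1"
  shows "measure_pmf.prob (sample_pmf rstar (rare_pair_pmf p))
           {(1, 2, False), (2, 3, True), (2, 3, False)} = 1 - p * sigm 1"
proof -
  have "(\<lambda>y. (Suc 0, 2::nat, y)) -` {(Suc 0, 2::nat, False), (2, 3, True), (2, 3, False)} = {False}"
       "(\<lambda>y. (2::nat, 3::nat, y)) -` {(Suc 0, 2::nat, False), (2, 3, True), (2, 3, False)} = UNIV"
    by auto
  moreover have "0 \<le> 1 - sigm 1" "0 \<le> 1 - p"
    using assms sigm_less_one[of 1] by auto
  ultimately have "emeasure (measure_pmf (sample_pmf rstar (rare_pair_pmf p)))
      {(1, 2, False), (2, 3, True), (2, 3, False)} = ennreal ((1 - sigm 1) * p + (1 - p))"
    using assms sigm_pos[of 1] by (simp add: sample_pmf_def rare_pair_pmf_def rstar_def emeasure_pmf_single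
        ennreal_mult[symmetric] ennreal_plus[symmetric] del: ennreal_plus)
  moreover have "(1 - sigm 1) * p + (1 - p) = 1 - p * sigm 1"
    by (simp add: algebra_simps)
  moreover have "p * sigm 1 \<le> 1"
    using assms sigm_pos[of 1] sigm_less_one[of 1] by (intro mult_le_one) auto
  ultimately show ?thesis
    by (simp add: measure_pmf.emeasure_eq_measure)
qed

lemma prob_sample_no_arm1:
  assumes "0 < p" "p < 1"
  shows "measure_pmf.prob (sample_pmf rstar (rare_pair_pmf p)) {(2, 3, True), (2, 3, False)} = 1 - p"
proof -
  have "(\<lambda>y. (Suc 0, 2::nat, y)) -` {(2::nat, 3::nat, True), (2, 3, False)} = {}"
       "(\<lambda>y. (2::nat, 3::nat, y)) -` {(2::nat, 3::nat, True), (2, 3, False)} = UNIV"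
    by auto
  then have "emeasure (measure_pmf (sample_pmf rstar (rare_pair_pmf p)))
      {(2, 3, True), (2, 3, False)} = ennreal (1 - p)"
    using assms by (simp add: sample_pmf_def rare_pair_pmf_def rstar_def)
  then show ?thesis
    using assms by (simp add: measure_pmf.emeasure_eq_measure)
qed

lemma prob_misleading_data:
  assumes "0 < p" "p < 1"
  shows "measure_pmf.prob (iid_pmf n (sample_pmf rstar (rare_pair_pmf p))) {D. misleading_data D}
           = (1 - p * sigm 1) ^ n - (1 - p) ^ n"
proof -
  define A :: "(nat \<times> nat \<times> bool) list set"
    where "A = {D. set D \<subseteq> {(1, 2, False), (2, 3, True), (2, 3, False)}}"
  define B :: "(nat \<times> nat \<times> bool) list set"
    where "B = {D. set D \<subseteq> {(2, 3, True), (2, 3, False)}}"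
  let ?M = "iid_pmf n (sample_pmf rstar (rare_pair_pmf p))"
  have "{D. misleading_data D} = A - B" "B \<subseteq> A"
    unfolding A_def B_def misleading_data_def by auto
  then have "measure_pmf.prob ?M {D. misleading_data D} = measure_pmf.prob ?M A - measure_pmf.prob ?M B"
    by (simp add: measure_pmf.finite_measure_Diff)
  also have "\<dots> = (1 - p * sigm 1) ^ n - (1 - p) ^ n"
    unfolding A_def B_def prob_iid_all_in prob_sample_misleading[OF assms] prob_sample_no_arm1[OF assms] ..
  finally show ?thesis .
qed

lemma power_diff_ge:
  fixes x y :: real
  assumes "0 \<le> y" "y \<le> x"
  shows "real n * (x - y) * y ^ (n - 1) \<le> x ^ n - y ^ n"
proof (cases n)
  case 0
  then show ?thesis by simp
next
  case (Suc k)
  have "y ^ k \<le> x ^ i * y ^ (k - i)" if "i < Suc k" for i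
  proof -
    have "y ^ k = y ^ i * y ^ (k - i)" using that by (simp flip: power_add)
    also have "\<dots> \<le> x ^ i * y ^ (k - i)"
      using assms by (intro mult_right_mono power_mono) auto
    finally show ?thesis .
  qed
  then have "(\<Sum>i<Suc k. y ^ k) \<le> (\<Sum>i<Suc k. x ^ i * y ^ (k - i))"
    by (intro sum_mono) simp
  then have "real (Suc k) * y ^ k \<le> (\<Sum>i<Suc k. x ^ i * y ^ (k - i))"
    by simp
  then have "(x - y) * (real (Suc k) * y ^ k) \<le> x ^ Suc k - y ^ Suc k"
    unfolding diff_power_eq_sum using assms by (intro mult_left_mono) auto
  then show ?thesis using Suc by (simp add: algebra_simps)
qed

lemma exp_minus_one_le_power:
  assumes "0 < n"
  shows "exp (- 1) \<le> (1 - 1 / real n) ^ (n - 1)"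
proof (cases "n = 1")
  case True
  then show ?thesis by simp
next
  case False
  define k where "k = n - 1"
  have k: "0 < k" "real n = real k + 1" using assms False unfolding k_def by auto
  have "(1 + 1 / real k) ^ k \<le> exp (1 / real k) ^ k"
    using exp_ge_add_one_self[of "1 / real k"] by (intro power_mono) (auto simp: add.commute)
  also have "\<dots> = exp 1"
    using k by (simp add: exp_of_nat_mult[symmetric])
  finally have "(1 + 1 / real k) ^ k \<le> exp 1" .
  then have "exp (- 1) \<le> 1 / (1 + 1 / real k) ^ k"
    unfolding exp_minus inverse_eq_divide by (intro divide_left_mono) (auto simp: add_pos_nonneg)
  also have "\<dots> = (1 / (1 + 1 / real k)) ^ k"
    by (simp add: power_one_over)
  also have "1 / (1 + 1 / real k) = 1 - 1 / real n"
    using k by (simp add: field_simps)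
  finally show ?thesis
    unfolding k_def .
qed

lemma prob_misleading_lower_bound:
  assumes "0 < n"
  shows "0.09 \<le> (1 - 1 / real n * sigm 1) ^ n - (1 - 1 / real n) ^ n"
proof -
  have "(1 - sigm 1) * exp (- 1) \<le> (1 - sigm 1) * (1 - 1 / real n) ^ (n - 1)"
    using exp_minus_one_le_power[OF assms] sigm_less_one[of 1] by (intro mult_left_mono) auto
  also have "\<dots> = real n * ((1 - 1 / real n * sigm 1) - (1 - 1 / real n)) * (1 - 1 / real n) ^ (n - 1)"
    using assms by (simp add: field_simps)
  also have "\<dots> \<le> (1 - 1 / real n * sigm 1) ^ n - (1 - 1 / real n) ^ n"
    using assms sigm_less_one[of 1] by (intro power_diff_ge) (auto simp: field_simps)
  finally have lower: "(1 - sigm 1) * exp (- 1) \<le> \<dots>" .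
  have "(1 + exp 1) * exp 1 \<le> (1 + 272/100) * (272/100 :: real)"
    using e_less_272 by (intro mult_mono) auto
  then have "(0.09 :: real) \<le> 1 / ((1 + exp 1) * exp 1)"
    by (simp add: field_simps add_pos_pos)
  also have "\<dots> = (1 - sigm 1) * exp (- 1)"
    by (simp add: one_minus_sigm exp_minus field_simps)
  finally show ?thesis using lower by linarith
qed

theorem corollary3:
  fixes n :: nat
  assumes "n > 500"
  shows "\<exists>\<mu>. pair_dist \<mu> \<and>
    measure_pmf.prob (iid_pmf n (sample_pmf rstar \<mu>))
      {D. \<forall>rs :: nat \<Rightarrow> nat \<Rightarrow> real.
            ((\<forall>m. rs m 3 = 0) \<and>
             ((\<lambda>m. CE_loss D (rs m)) \<longlonglongrightarrow> (INF r \<in> {r :: nat \<Rightarrow> real. r 3 = 0}. CE_loss D r)))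
            \<longrightarrow> (\<exists>m0. \<forall>m \<ge> m0. 1 \<notin> argmax_arms (rs m) \<and>
                   (\<forall>\<pi> :: nat pmf. set_pmf \<pi> \<subseteq> argmax_arms (rs m) \<longrightarrow> SubOpt \<pi> \<ge> 1))}
    \<ge> 0.09" (is "\<exists>\<mu>. _ \<and> measure_pmf.prob _ ?good \<ge> _")
proof (intro exI conjI)
  let ?M = "iid_pmf n (sample_pmf rstar (rare_pair_pmf (1 / real n)))"
  show "pair_dist (rare_pair_pmf (1 / real n))"
    by (rule pair_dist_rare_pair_pmf)
  have "0.09 \<le> (1 - 1 / real n * sigm 1) ^ n - (1 - 1 / real n) ^ n"
    using assms by (intro prob_misleading_lower_bound) simp
  also have "\<dots> = measure_pmf.prob ?M {D. misleading_data D}"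
    using assms by (intro prob_misleading_data[symmetric]) auto
  also have "\<dots> \<le> measure_pmf.prob ?M ?good"
    using misleading_data_greedy_suboptimal by (intro measure_pmf.finite_measure_mono) (blast, simp)
  finally show "0.09 \<le> measure_pmf.prob ?M ?good" .
qed

end
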